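(* Let $S$ be an inductive left $E$-monoid with left $E$-modal operation $\cdot$, and for $s\in S$, $e\in E$ put $s^e=(s\cdot e)s$. Then for all $s,t\in S$ and $e,f\in E$: (ZS1) $(st)\cdot e=s\cdot(t\cdot e)$; (ZS2) $s\cdot(e\wedge f)=(s\cdot e)\wedge(s^e\cdot f)$; (ZS4) $(st)^e=s^{t\cdot e}t^e$. Moreover (ZS3) $(s^e)^f=s^{e\wedge f}$ holds for all $s\in S$, $e,f\in E$ if and only if $E$ has definable meets. In that case the operation $(e,s)\otimes(f,t)=(e\wedge(s\cdot f),(s\cdot f)st)$ on $E\times S$ is associative (giving the Zappa-Szép product $E\bowtie S$), $Rest(E,S)$ is a subsemigroup of $E\bowtie S$ (its multiplication being the restriction of $\otimes$), $\hat E=\{(e,e)\mid e\in E\}$ is a semilattice under $\otimes$ isomorphic to $(E,\wedge)$, and every subsemigroup $T$ of $E\bowtie S$ which is a left restriction semigroup under some unary operation $D$ with $D(T)=\hat E$ is contained in $Rest(E,S)$.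
   Context: For a semigroup $S$, $E(S)$ is its set of idempotents; for $e,f\in E(S)$, $e\le_r f$ iff $e=ef$. $E\subseteq E(S)$ is right pre-reduced if $e=ef$ and $f=fe$ imply $e=f$ for $e,f\in E$. Let $S$ be a monoid and $1\in E\subseteq E(S)$. $S$ is an inductive left $E$-monoid if $E$ is right pre-reduced, $(E,\le_r)$ is a meet-semilattice with meet $\wedge$, and (I1') for all $t\in S$, $e\in E$ there is $t\cdot e\in E$ such that for all $s\in S$: $ste=st$ iff $s(t\cdot e)=s$ (the necessarily unique map $(t,e)\mapsto t\cdot e$ is the left $E$-modal operation); (I2') for $s\in S$, $e,f\in E$: $se=sf=s$ implies $s(e\wedge f)=s$. Such $S$ has definable meets if $(e\cdot f)e\in E$ for all $e,f\in E$. $Rest(E,S)$ is the set $\{(e,s)\in E\times S\mid es=s\}$ with multiplication $(e,s)(f,t)=(e\wedge(s\cdot f),(e\wedge(s\cdot f))st)$ and $D((e,s))=(e,e)$. A left restriction semigroup is a semigroup with unary $D$ satisfying $D(x)x=x$, $D(x)D(y)=D(y)D(x)$, $D(D(x)y)=D(x)D(y)$, $xD(y)=D(xy)x$; $D(T)=\{D(x)\mid x\in T\}$. *)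

theory Defs
  imports Main
begin

text \<open>The monoid S is the type 'a of class monoid_mult; E is a subset of it.\<close>

definition le_r :: "'a::monoid_mult \<Rightarrow> 'a \<Rightarrow> bool" where
  "le_r e f \<longleftrightarrow> e = e * f"

definition right_pre_reduced :: "'a::monoid_mult set \<Rightarrow> bool" where
  "right_pre_reduced E \<longleftrightarrow> (\<forall>e\<in>E. \<forall>f\<in>E. e = e * f \<and> f = f * e \<longrightarrow> e = f)"

definition is_meet :: "'a::monoid_mult set \<Rightarrow> 'a \<Rightarrow> 'a \<Rightarrow> 'a \<Rightarrow> bool" where
  "is_meet E e f m \<longleftrightarrow> m \<in> E \<and> le_r m e \<and> le_r m f \<and>
     (\<forall>g\<in>E. le_r g e \<and> le_r g f \<longrightarrow> le_r g m)"

definition meetE :: "'a::monoid_mult set \<Rightarrow> 'a \<Rightarrow> 'a \<Rightarrow> 'a" where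
  "meetE E e f = (THE m. is_meet E e f m)"

definition is_modal :: "'a::monoid_mult set \<Rightarrow> 'a \<Rightarrow> 'a \<Rightarrow> 'a \<Rightarrow> bool" where
  "is_modal E t e u \<longleftrightarrow> u \<in> E \<and> (\<forall>s. s * t * e = s * t \<longleftrightarrow> s * u = s)"

definition modal :: "'a::monoid_mult set \<Rightarrow> 'a \<Rightarrow> 'a \<Rightarrow> 'a" where
  "modal E t e = (THE u. is_modal E t e u)"

definition inductive_left_E_monoid :: "'a::monoid_mult set \<Rightarrow> bool" where
  "inductive_left_E_monoid E \<longleftrightarrow>
     1 \<in> E \<and> (\<forall>e\<in>E. e * e = e) \<and>
     right_pre_reduced E \<and>
     (\<forall>e\<in>E. \<forall>f\<in>E. \<exists>m. is_meet E e f m) \<and>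
     (\<forall>t. \<forall>e\<in>E. \<exists>u. is_modal E t e u) \<and>
     (\<forall>s. \<forall>e\<in>E. \<forall>f\<in>E. s * e = s \<and> s * f = s \<longrightarrow> s * meetE E e f = s)"

definition definable_meets :: "'a::monoid_mult set \<Rightarrow> bool" where
  "definable_meets E \<longleftrightarrow> (\<forall>e\<in>E. \<forall>f\<in>E. modal E e f * e \<in> E)"

definition restr :: "'a::monoid_mult set \<Rightarrow> 'a \<Rightarrow> 'a \<Rightarrow> 'a" where
  "restr E s e = modal E s e * s"

definition zs_mult :: "'a::monoid_mult set \<Rightarrow> 'a \<times> 'a \<Rightarrow> 'a \<times> 'a \<Rightarrow> 'a \<times> 'a" where
  "zs_mult E x y = (case x of (e, s) \<Rightarrow> case y of (f, t) \<Rightarrow>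
      (meetE E e (modal E s f), modal E s f * s * t))"

definition Rest :: "'a::monoid_mult set \<Rightarrow> ('a \<times> 'a) set" where
  "Rest E = {(e, s). e \<in> E \<and> e * s = s}"

definition rest_mult :: "'a::monoid_mult set \<Rightarrow> 'a \<times> 'a \<Rightarrow> 'a \<times> 'a \<Rightarrow> 'a \<times> 'a" where
  "rest_mult E x y = (case x of (e, s) \<Rightarrow> case y of (f, t) \<Rightarrow>
      (let g = meetE E e (modal E s f) in (g, g * s * t)))"

definition Ehat :: "'a::monoid_mult set \<Rightarrow> ('a \<times> 'a) set" where
  "Ehat E = {(e, e) | e. e \<in> E}"

definition left_restriction_on :: "'b set \<Rightarrow> ('b \<Rightarrow> 'b \<Rightarrow> 'b) \<Rightarrow> ('b \<Rightarrow> 'b) \<Rightarrow> bool" where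
  "left_restriction_on T mult D \<longleftrightarrow>
     (\<forall>x\<in>T. \<forall>y\<in>T. mult x y \<in> T) \<and>
     (\<forall>x\<in>T. \<forall>y\<in>T. \<forall>z\<in>T. mult (mult x y) z = mult x (mult y z)) \<and>
     (\<forall>x\<in>T. D x \<in> T) \<and>
     (\<forall>x\<in>T. \<forall>y\<in>T.
        mult (D x) x = x \<and>
        mult (D x) (D y) = mult (D y) (D x) \<and>
        D (mult (D x) y) = mult (D x) (D y) \<and>
        mult x (D y) = mult (D (mult x y)) x)"

end

theory Submission
  imports Defs
begin

text \<open>Both the modal operation and the meet are characterised by universal properties,
  so identities between them are proved by checking which elements satisfy those properties;
  right pre-reducedness makes the characterising elements unique. The distributive law
  \<open>s \<cdot> (e \<sqinter> f) = (s \<cdot> e) \<sqinter> (s \<cdot> f)\<close> together with \<open>e \<sqinter> (e \<cdot> f) = e \<sqinter> f\<close> yields (ZS2).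
  Definable meets turn out to be equivalent to \<open>(e \<cdot> f) e = e \<sqinter> f\<close>, which is (ZS3) at \<open>s = 1\<close>
  and conversely gives (ZS3) for every \<open>s\<close>; the same identity makes the Zappa-Sz\<acute>ep product
  associative and closes \<open>Rest(E,S)\<close> under it. Finally \<open>D(x) x = x\<close> with \<open>D(x) = (g, g)\<close>
  forces \<open>x = (e, s)\<close> to satisfy \<open>e = g \<sqinter> e\<close> and \<open>s = e s\<close>.\<close>

lemma le_r_trans: "(a::'a::semigroup_mult) * b = a \<Longrightarrow> b * c = b \<Longrightarrow> a * c = a"
  by (metis mult.assoc)

locale left_E_modal =
  fixes E :: "'a::monoid_mult set"
  assumes idem: "e \<in> E \<Longrightarrow> e * e = e"
    and pre_reduced: "right_pre_reduced E"
    and modal_exists: "e \<in> E \<Longrightarrow> \<exists>u. is_modal E t e u"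
begin

lemma pre_reducedD: "e \<in> E \<Longrightarrow> f \<in> E \<Longrightarrow> e * f = e \<Longrightarrow> f * e = f \<Longrightarrow> e = f"
  using pre_reduced unfolding right_pre_reduced_def by metis

lemma modal_unique:
  assumes "is_modal E t e u" "is_modal E t e u'"
  shows "u = u'"
proof -
  have u: "u \<in> E" "u' \<in> E" "\<And>s. s * t * e = s * t \<longleftrightarrow> s * u = s" "\<And>s. s * t * e = s * t \<longleftrightarrow> s * u' = s"
    using assms unfolding is_modal_def by auto
  have "u * u' = u" "u' * u = u'"
    using u idem[of u] idem[of u'] by metis+
  then show ?thesis
    using pre_reducedD u by blast
qed

lemma modal_eqI: "is_modal E t e u \<Longrightarrow> modal E t e = u"
  unfolding modal_def using modal_unique by blast

lemma is_modal_modal: "e \<in> E \<Longrightarrow> is_modal E t e (modal E t e)"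
  using modal_exists modal_eqI by metis

lemma modal_in_E: "e \<in> E \<Longrightarrow> modal E t e \<in> E"
  using is_modal_modal is_modal_def by blast

lemma modal_absorb_iff: "e \<in> E \<Longrightarrow> s * t * e = s * t \<longleftrightarrow> s * modal E t e = s"
  using is_modal_modal unfolding is_modal_def by blast

lemma modal_left_absorb: "e \<in> E \<Longrightarrow> modal E t e * t * e = modal E t e * t"
  using modal_absorb_iff idem modal_in_E by metis

lemma modal_one: "e \<in> E \<Longrightarrow> modal E 1 e = e"
  by (rule modal_eqI) (simp add: is_modal_def)

lemma restr_one: "e \<in> E \<Longrightarrow> restr E 1 e = e"
  by (simp add: restr_def modal_one)

lemma modal_mult: "e \<in> E \<Longrightarrow> modal E (s * t) e = modal E s (modal E t e)"
proof (rule modal_eqI)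
  assume e: "e \<in> E"
  have "r * (s * t) * e = r * (s * t) \<longleftrightarrow> r * s * modal E t e = r * s" for r
    using modal_absorb_iff[OF e, of "r * s" t] by (simp add: mult.assoc)
  then show "is_modal E (s * t) e (modal E s (modal E t e))"
    using modal_absorb_iff[OF modal_in_E[OF e]] modal_in_E[OF modal_in_E[OF e]]
    by (simp add: is_modal_def)
qed

lemma restr_mult: "e \<in> E \<Longrightarrow> restr E (s * t) e = restr E s (modal E t e) * restr E t e"
proof -
  assume e: "e \<in> E"
  define c where "c = modal E t e"
  define w where "w = modal E s c"
  have "w * s * c = w * s"
    using modal_left_absorb modal_in_E e unfolding w_def c_def by blast
  then have "w * (s * t) = w * s * (c * t)"
    by (metis mult.assoc)
  then show ?thesis
    by (simp add: restr_def modal_mult[OF e] w_def c_def mult.assoc)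
qed

end

locale inductive_left_E = left_E_modal +
  assumes meet_exists: "e \<in> E \<Longrightarrow> f \<in> E \<Longrightarrow> \<exists>m. is_meet E e f m"
    and absorb_meetE: "e \<in> E \<Longrightarrow> f \<in> E \<Longrightarrow> s * e = s \<Longrightarrow> s * f = s \<Longrightarrow> s * meetE E e f = s"

lemma inductive_left_E_monoid_imp_inductive_left_E:
  "inductive_left_E_monoid E \<Longrightarrow> inductive_left_E E"
  by unfold_locales (auto simp: inductive_left_E_monoid_def)

context inductive_left_E
begin

lemma is_meet_unique: "is_meet E e f m \<Longrightarrow> is_meet E e f m' \<Longrightarrow> m = m'"
  using pre_reducedD unfolding is_meet_def le_r_def by metis

lemma meetE_eqI: "is_meet E e f m \<Longrightarrow> meetE E e f = m"
  unfolding meetE_def using is_meet_unique by blast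

lemma is_meet_meetE: "e \<in> E \<Longrightarrow> f \<in> E \<Longrightarrow> is_meet E e f (meetE E e f)"
  using meet_exists meetE_eqI by metis

lemma
  assumes "e \<in> E" "f \<in> E"
  shows meetE_in_E: "meetE E e f \<in> E"
    and meetE_le1: "meetE E e f * e = meetE E e f"
    and meetE_le2: "meetE E e f * f = meetE E e f"
  using is_meet_meetE[OF assms] unfolding is_meet_def le_r_def by metis+

lemma meetE_greatest:
  "e \<in> E \<Longrightarrow> f \<in> E \<Longrightarrow> g \<in> E \<Longrightarrow> g * e = g \<Longrightarrow> g * f = g \<Longrightarrow> g * meetE E e f = g"
  using is_meet_meetE unfolding is_meet_def le_r_def by metis

lemma meetE_unique:
  assumes "e \<in> E" "f \<in> E" "m \<in> E" "m * e = m" "m * f = m"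
    and "\<And>g. g \<in> E \<Longrightarrow> g * e = g \<Longrightarrow> g * f = g \<Longrightarrow> g * m = g"
  shows "meetE E e f = m"
  by (rule meetE_eqI) (use assms in \<open>auto simp: is_meet_def le_r_def\<close>)

lemma meetE_commute: "e \<in> E \<Longrightarrow> f \<in> E \<Longrightarrow> meetE E e f = meetE E f e"
  by (rule meetE_unique) (auto simp: meetE_in_E meetE_le1 meetE_le2 meetE_greatest)

lemma meetE_idem: "e \<in> E \<Longrightarrow> meetE E e e = e"
  by (rule meetE_unique) (auto simp: idem)

lemma meetE_assoc:
  assumes x: "x \<in> E" and y: "y \<in> E" and z: "z \<in> E"
  shows "meetE E (meetE E x y) z = meetE E x (meetE E y z)"
proof (rule meetE_unique)
  let ?m = "meetE E x (meetE E y z)"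
  have yz: "meetE E y z \<in> E"
    using meetE_in_E y z by blast
  show "meetE E x y \<in> E" "?m \<in> E"
    using meetE_in_E x y yz by auto
  have mx: "?m * x = ?m" and myz: "?m * meetE E y z = ?m"
    using meetE_le1[OF x yz] meetE_le2[OF x yz] .
  show "?m * z = ?m"
    using le_r_trans[OF myz meetE_le2[OF y z]] .
  show "?m * meetE E x y = ?m"
    using meetE_greatest[OF x y meetE_in_E[OF x yz] mx le_r_trans[OF myz meetE_le1[OF y z]]] .
  fix g assume g: "g \<in> E" "g * meetE E x y = g" "g * z = g"
  have "g * x = g" "g * y = g"
    using le_r_trans[OF g(2) meetE_le1[OF x y]] le_r_trans[OF g(2) meetE_le2[OF x y]] .
  then show "g * ?m = g"
    using meetE_greatest g(1,3) x y z yz by metis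
qed (use z in auto)

lemma meetE_modal_self: "e \<in> E \<Longrightarrow> f \<in> E \<Longrightarrow> meetE E e (modal E e f) = meetE E e f"
proof (rule meetE_unique)
  assume e: "e \<in> E" and f: "f \<in> E"
  show "modal E e f \<in> E" "meetE E e f \<in> E"
    using e f modal_in_E meetE_in_E by auto
  show "meetE E e f * e = meetE E e f"
    using meetE_le1[OF e f] .
  then show "meetE E e f * modal E e f = meetE E e f"
    using modal_absorb_iff[OF f] meetE_le2[OF e f] by metis
  fix g assume g: "g \<in> E" "g * e = g" "g * modal E e f = g"
  then have "g * f = g"
    using modal_absorb_iff[OF f] by metis
  then show "g * meetE E e f = g"
    using meetE_greatest e f g(1,2) by blast
qed

lemma modal_meetE:
  assumes e: "e \<in> E" and f: "f \<in> E"
  shows "modal E s (meetE E e f) = meetE E (modal E s e) (modal E s f)"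
proof -
  define m where "m = meetE E e f"
  define u where "u = modal E s m"
  have m: "m \<in> E"
    using meetE_in_E e f m_def by blast
  have usm: "u * s * m = u * s"
    using modal_left_absorb[OF m] u_def by simp
  have "u * s * e = u * s" "u * s * f = u * s"
    using le_r_trans[OF usm] meetE_le1[OF e f] meetE_le2[OF e f] m_def by simp_all
  then have "u * modal E s e = u" "u * modal E s f = u"
    using modal_absorb_iff e f by blast+
  moreover have "g * u = g"
    if "g * modal E s e = g" "g * modal E s f = g" for g
  proof -
    have "g * s * e = g * s" "g * s * f = g * s"
      using that modal_absorb_iff e f by blast+
    then have "g * s * m = g * s"
      using absorb_meetE e f m_def by blast
    then show ?thesis
      using modal_absorb_iff[OF m] u_def by blast
  qed
  ultimately have "meetE E (modal E s e) (modal E s f) = u"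
    using meetE_unique modal_in_E m e f u_def by simp
  then show ?thesis
    unfolding u_def m_def ..
qed

lemma modal_meetE_restr:
  assumes "e \<in> E" "f \<in> E"
  shows "modal E s (meetE E e f) = meetE E (modal E s e) (modal E (restr E s e) f)"
  using assms by (simp add: modal_meetE restr_def modal_mult meetE_modal_self modal_in_E)

lemma modal_mult_eq_meetE:
  assumes e: "e \<in> E" and f: "f \<in> E" and c: "modal E e f * e \<in> E"
  shows "modal E e f * e = meetE E e f"
proof (rule sym, rule meetE_unique)
  define c where "c = modal E e f"
  show "c * e * e = c * e"
    using idem[OF e] by (simp add: mult.assoc)
  show "c * e * f = c * e"
    unfolding c_def by (rule modal_left_absorb[OF f])
  fix g assume g: "g \<in> E" "g * e = g" "g * f = g"
  then have "g * e * f = g * e"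
    by simp
  then have "g * c = g"
    using modal_absorb_iff[OF f] g(2) c_def by metis
  then show "g * (c * e) = g"
    using g(2) by (simp add: mult.assoc[symmetric])
qed (use assms in auto)

lemma definable_meets_iff:
  "definable_meets E \<longleftrightarrow> (\<forall>e\<in>E. \<forall>f\<in>E. modal E e f * e = meetE E e f)"
  using modal_mult_eq_meetE meetE_in_E unfolding definable_meets_def by metis

lemma definable_meetsD:
  "definable_meets E \<Longrightarrow> e \<in> E \<Longrightarrow> f \<in> E \<Longrightarrow> modal E e f * e = meetE E e f"
  using definable_meets_iff by blast

lemma restr_restr_iff_definable_meets:
  "(\<forall>s. \<forall>e\<in>E. \<forall>f\<in>E. restr E (restr E s e) f = restr E s (meetE E e f))
     \<longleftrightarrow> definable_meets E"
proof
  assume "\<forall>s. \<forall>e\<in>E. \<forall>f\<in>E. restr E (restr E s e) f = restr E s (meetE E e f)"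
  then show "definable_meets E"
    unfolding definable_meets_iff
    by (metis restr_one meetE_in_E restr_def)
next
  assume dm: "definable_meets E"
  show "\<forall>s. \<forall>e\<in>E. \<forall>f\<in>E. restr E (restr E s e) f = restr E s (meetE E e f)"
  proof (intro allI ballI)
    fix s e f assume e: "e \<in> E" and f: "f \<in> E"
    define a where "a = modal E s e"
    define b where "b = modal E s f"
    have ab: "a \<in> E" "b \<in> E"
      using a_def b_def modal_in_E e f by auto
    have "restr E (restr E s e) f = modal E a b * a * s"
      by (simp add: restr_def modal_mult[OF f] a_def b_def mult.assoc)
    also have "\<dots> = meetE E a b * s"
      using definable_meetsD[OF dm ab] by simp
    also have "\<dots> = restr E s (meetE E e f)"
      by (simp add: restr_def modal_meetE e f a_def b_def)
    finally show "restr E (restr E s e) f = restr E s (meetE E e f)" .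
  qed
qed

lemma zs_mult_simp: "zs_mult E (e, s) (f, t) = (meetE E e (modal E s f), modal E s f * s * t)"
  by (simp add: zs_mult_def)

lemma zs_mult_closed: "x \<in> E \<times> UNIV \<Longrightarrow> y \<in> E \<times> UNIV \<Longrightarrow> zs_mult E x y \<in> E \<times> UNIV"
  by (auto simp: zs_mult_simp meetE_in_E modal_in_E)

lemma zs_mult_assoc_pairs:
  assumes dm: "definable_meets E" and e: "e \<in> E" and f: "f \<in> E" and g: "g \<in> E"
  shows "zs_mult E (zs_mult E (e, s) (f, t)) (g, u) = zs_mult E (e, s) (zs_mult E (f, t) (g, u))"
proof -
  define a where "a = modal E s f"
  define c where "c = modal E t g"
  define b where "b = modal E s c"
  define w where "w = meetE E a b"
  have E: "a \<in> E" "b \<in> E" "c \<in> E"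
    using a_def b_def c_def modal_in_E f g by auto
  have "modal E (a * s * t) g = modal E a b"
    by (simp add: modal_mult g modal_in_E b_def c_def)
  moreover have "modal E a b * a = w"
    using definable_meetsD[OF dm] E w_def by blast
  moreover have "meetE E (meetE E e a) (modal E a b) = meetE E e w"
    using meetE_assoc meetE_modal_self modal_in_E e E w_def by simp
  ultimately have lhs: "zs_mult E (zs_mult E (e, s) (f, t)) (g, u) = (meetE E e w, w * s * t * u)"
    by (simp add: zs_mult_simp a_def[symmetric] mult.assoc[symmetric])
  have wsc: "w * s * c = w * s"
    using modal_absorb_iff[of c w s] meetE_le2 E w_def b_def by simp
  have "modal E s (meetE E f c) = w"
    by (simp add: modal_meetE f E w_def a_def b_def)
  then have "zs_mult E (e, s) (zs_mult E (f, t) (g, u)) = (meetE E e w, w * s * c * t * u)"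
    by (simp add: zs_mult_simp c_def[symmetric] mult.assoc)
  with lhs wsc show ?thesis
    by simp
qed

lemma zs_mult_assoc:
  "definable_meets E \<Longrightarrow> x \<in> E \<times> UNIV \<Longrightarrow> y \<in> E \<times> UNIV \<Longrightarrow> z \<in> E \<times> UNIV \<Longrightarrow>
    zs_mult E (zs_mult E x y) z = zs_mult E x (zs_mult E y z)"
  using zs_mult_assoc_pairs by auto

lemma Rest_subset: "Rest E \<subseteq> E \<times> UNIV"
  by (auto simp: Rest_def)

lemma Rest_zs_mult:
  assumes dm: "definable_meets E" and x: "x \<in> Rest E" and y: "y \<in> Rest E"
  shows "zs_mult E x y \<in> Rest E \<and> rest_mult E x y = zs_mult E x y"
proof -
  obtain e s where x: "x = (e, s)" "e \<in> E" "e * s = s"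
    using x by (auto simp: Rest_def)
  obtain f t where y: "y = (f, t)" "f \<in> E"
    using y by (auto simp: Rest_def)
  define a where "a = modal E s f"
  define g where "g = meetE E e a"
  have a: "a \<in> E" and g: "g \<in> E"
    using a_def g_def modal_in_E meetE_in_E x y by auto
  have "modal E e a = a"
    using modal_mult[OF y(2), of e s] x(3) a_def by simp
  then have "g = a * e"
    using definable_meetsD[OF dm x(2) a] g_def by simp
  then have "a * s = g * s"
    using x(3) by (simp add: mult.assoc)
  moreover have "g * (g * s * t) = g * s * t"
    using idem[OF g] by (simp add: mult.assoc[symmetric])
  ultimately show ?thesis
    using x y g
    by (simp add: zs_mult_simp rest_mult_def Rest_def a_def[symmetric] g_def[symmetric])
qed

lemma zs_mult_Ehat:
  "definable_meets E \<Longrightarrow> e \<in> E \<Longrightarrow> f \<in> E \<Longrightarrow>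
    zs_mult E (e, e) (f, f) = (meetE E e f, meetE E e f)"
  using definable_meetsD[of e f] meetE_modal_self[of e f] meetE_le2[of e f]
  by (simp add: zs_mult_simp)

lemma Ehat_semilattice:
  assumes "definable_meets E" "x \<in> Ehat E" "y \<in> Ehat E"
  shows "zs_mult E x y \<in> Ehat E \<and> zs_mult E x y = zs_mult E y x \<and> zs_mult E x x = x"
  using assms zs_mult_Ehat meetE_commute meetE_idem meetE_in_E by (auto simp: Ehat_def)

lemma bij_betw_Ehat: "bij_betw (\<lambda>e. (e, e)) E (Ehat E)"
  by (auto simp: bij_betw_def inj_on_def Ehat_def)

lemma left_restriction_subset_Rest:
  assumes dm: "definable_meets E" and T: "T \<subseteq> E \<times> UNIV"
    and L: "left_restriction_on T (zs_mult E) D" and DT: "D ` T = Ehat E"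
  shows "T \<subseteq> Rest E"
proof
  fix x assume xT: "x \<in> T"
  obtain e s where x: "x = (e, s)" "e \<in> E"
    using T xT by auto
  obtain g where g: "D x = (g, g)" "g \<in> E"
    using DT xT by (auto simp: Ehat_def)
  have "zs_mult E (D x) x = x"
    using L xT unfolding left_restriction_on_def by blast
  moreover have "zs_mult E (D x) x = (meetE E g e, meetE E g e * s)"
    using g x definable_meetsD[OF dm] by (simp add: zs_mult_simp meetE_modal_self)
  ultimately have "meetE E g e = e" "meetE E g e * s = s"
    using x(1) by (metis prod.inject)+
  then show "x \<in> Rest E"
    using x by (simp add: Rest_def)
qed

end

theorem proposition6p2:
  fixes E :: "'a::monoid_mult set"
  assumes "inductive_left_E_monoid E"
  shows "(\<forall>s t. \<forall>e\<in>E. modal E (s * t) e = modal E s (modal E t e))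
    \<and> (\<forall>s. \<forall>e\<in>E. \<forall>f\<in>E.
          modal E s (meetE E e f) = meetE E (modal E s e) (modal E (restr E s e) f))
    \<and> (\<forall>s t. \<forall>e\<in>E. restr E (s * t) e = restr E s (modal E t e) * restr E t e)
    \<and> ((\<forall>s. \<forall>e\<in>E. \<forall>f\<in>E. restr E (restr E s e) f = restr E s (meetE E e f))
         \<longleftrightarrow> definable_meets E)
    \<and> (definable_meets E \<longrightarrow>
         (\<forall>x\<in>E \<times> UNIV. \<forall>y\<in>E \<times> UNIV. zs_mult E x y \<in> E \<times> UNIV)
       \<and> (\<forall>x\<in>E \<times> UNIV. \<forall>y\<in>E \<times> UNIV. \<forall>z\<in>E \<times> UNIV.
            zs_mult E (zs_mult E x y) z = zs_mult E x (zs_mult E y z))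
       \<and> Rest E \<subseteq> E \<times> UNIV
       \<and> (\<forall>x\<in>Rest E. \<forall>y\<in>Rest E. zs_mult E x y \<in> Rest E \<and> rest_mult E x y = zs_mult E x y)
       \<and> (\<forall>x\<in>Ehat E. \<forall>y\<in>Ehat E.
            zs_mult E x y \<in> Ehat E \<and> zs_mult E x y = zs_mult E y x \<and> zs_mult E x x = x)
       \<and> bij_betw (\<lambda>e. (e, e)) E (Ehat E)
       \<and> (\<forall>e\<in>E. \<forall>f\<in>E. zs_mult E (e, e) (f, f) = (meetE E e f, meetE E e f))
       \<and> (\<forall>T D. T \<subseteq> E \<times> UNIV \<and> left_restriction_on T (zs_mult E) D \<and> D ` T = Ehat E
            \<longrightarrow> T \<subseteq> Rest E))"
proof -
  interpret inductive_left_E E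
    using assms by (rule inductive_left_E_monoid_imp_inductive_left_E)
  show ?thesis
  proof (intro conjI impI)
    assume dm: "definable_meets E"
    show "\<forall>x\<in>E \<times> UNIV. \<forall>y\<in>E \<times> UNIV. \<forall>z\<in>E \<times> UNIV.
        zs_mult E (zs_mult E x y) z = zs_mult E x (zs_mult E y z)"
      using zs_mult_assoc[OF dm] by blast
    show "\<forall>x\<in>Rest E. \<forall>y\<in>Rest E. zs_mult E x y \<in> Rest E \<and> rest_mult E x y = zs_mult E x y"
      using Rest_zs_mult[OF dm] by blast
    show "\<forall>x\<in>Ehat E. \<forall>y\<in>Ehat E.
        zs_mult E x y \<in> Ehat E \<and> zs_mult E x y = zs_mult E y x \<and> zs_mult E x x = x"
      using Ehat_semilattice[OF dm] by blast
    show "\<forall>e\<in>E. \<forall>f\<in>E. zs_mult E (e, e) (f, f) = (meetE E e f, meetE E e f)"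
      using zs_mult_Ehat[OF dm] by blast
    show "\<forall>T D. T \<subseteq> E \<times> UNIV \<and> left_restriction_on T (zs_mult E) D \<and> D ` T = Ehat E
        \<longrightarrow> T \<subseteq> Rest E"
      using left_restriction_subset_Rest[OF dm] by blast
  qed (use modal_mult modal_meetE_restr restr_mult restr_restr_iff_definable_meets
        zs_mult_closed Rest_subset bij_betw_Ehat in blast)+
qed

end
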